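(* For each integer $g\ge 3$ there exists a nonempty congruence family of genus $g$ hyperelliptic curves over $\mathbb{Q}$ with a rational Weierstrass point $\infty$ such that every curve $C$ in the family has good reduction at $3$ and satisfies $C_{\mathbb{F}_3}(\mathbb{F}_3)=\{\overline{\infty}\}$ and $C_{\mathbb{F}_3}(\mathbb{F}_9)=\{\overline{\infty},(0,\pm\alpha),(1,\pm\alpha),(2,\pm\alpha)\}$ for some $\alpha\in\mathbb{F}_9\setminus\mathbb{F}_3$.
   Context: A genus $g$ hyperelliptic curve over $\mathbb{Q}$ with a marked rational Weierstrass point $\infty$ has a unique minimal affine model $y^2=x^{2g+1}+a_2x^{2g-1}+\dots+a_{2g+1}$ with integer coefficients, separable right-hand side, $\infty$ the point at infinity, and no prime $p$ with $p^{2i}\mid a_i$ for all $i\ge2$. A congruence family is the set of such curves whose minimal-equation coefficients satisfy a given finite set of congruence conditions. $C_{\mathbb{F}_3}$ denotes the reduction mod $3$ of the minimal model, with points written in the affine coordinates $(x,y)$ together with the reduction $\overline{\infty}$ of $\infty$. *)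

theory Defs
  imports "HOL-Computational_Algebra.Computational_Algebra" "Berlekamp_Zassenhaus.Finite_Field"
begin

typedef three = "{0::nat, 1, 2}" by auto

lemma card_three: "CARD(three) = 3"
proof -
  have "CARD(three) = card {0::nat, 1, 2}"
    using type_definition.card[OF type_definition_three] by simp
  thus ?thesis by simp
qed

instance three :: finite
proof
  show "finite (UNIV :: three set)"
    using type_definition_three
    by (metis (mono_tags) finite.emptyI finite_imageI finite_insert type_definition.Abs_image)
qed

instance three :: prime_card
  by standard (simp add: card_three)

type_synonym F3 = "three mod_ring"

definition separable :: "'a::field poly \<Rightarrow> bool" where
  "separable p \<longleftrightarrow> coprime p (pderiv p)"

definition hyp_rhs :: "nat \<Rightarrow> (nat \<Rightarrow> int) \<Rightarrow> int poly" where
  "hyp_rhs g a = Polynomial.monom 1 (2*g+1) + (\<Sum>i\<in>{2..2*g+1}. Polynomial.monom (a i) (2*g+1-i))"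

(* a is the coefficient vector of a minimal model of a genus g hyperelliptic curve
   with marked rational Weierstrass point at infinity *)
definition minimal_model :: "nat \<Rightarrow> (nat \<Rightarrow> int) \<Rightarrow> bool" where
  "minimal_model g a \<longleftrightarrow>
     separable (map_poly of_int (hyp_rhs g a) :: rat poly) \<and>
     \<not> (\<exists>p::int. prime p \<and> (\<forall>i\<in>{2..2*g+1}. p ^ (2*i) dvd a i))"

definition in_cong_family :: "nat \<Rightarrow> (nat \<Rightarrow> int) \<Rightarrow> (nat \<Rightarrow> int) \<Rightarrow> (nat \<Rightarrow> int) \<Rightarrow> bool" where
  "in_cong_family g c m a \<longleftrightarrow> minimal_model g a \<and> (\<forall>i\<in>{2..2*g+1}. [a i = c i] (mod m i))"

definition rhs3 :: "nat \<Rightarrow> (nat \<Rightarrow> int) \<Rightarrow> F3 poly" where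
  "rhs3 g a = map_poly of_int (hyp_rhs g a)"

(* good reduction at 3: the reduction of the minimal model is smooth, i.e. rhs separable mod 3 *)
definition good_red3 :: "nat \<Rightarrow> (nat \<Rightarrow> int) \<Rightarrow> bool" where
  "good_red3 g a \<longleftrightarrow> separable (rhs3 g a)"

(* F_9 is modelled as F_3[t]/(t^2+1); its elements are represented uniquely by
   polynomials in F_3[t] of degree <= 1. *)
definition F9 :: "F3 poly set" where
  "F9 = {u. degree u \<le> 1}"

definition F9_modulus :: "F3 poly" where
  "F9_modulus = [:1, 0, 1:]"

definition affine_pts_F9 :: "nat \<Rightarrow> (nat \<Rightarrow> int) \<Rightarrow> (F3 poly \<times> F3 poly) set" where
  "affine_pts_F9 g a = {(x, y). x \<in> F9 \<and> y \<in> F9 \<and>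
      F9_modulus dvd (y ^ 2 - pcompose (rhs3 g a) x)}"

definition affine_pts_F3 :: "nat \<Rightarrow> (nat \<Rightarrow> int) \<Rightarrow> (F3 \<times> F3) set" where
  "affine_pts_F3 g a = {(x, y). y ^ 2 = poly (rhs3 g a) x}"

end

theory Submission
  imports Defs
    "Berlekamp_Zassenhaus.Square_Free_Int_To_Square_Free_GFp"
    "HOL-Library.Product_Plus"
begin

(* Take y^2 = F(x) with F = x^(2g+1) - x^m - 1, where m is odd and 2g+1+m = 4 (mod 8), or
   F = x^9 + x^3 + x - 1 when g = 4, together with all curves whose coefficients agree with
   those of F modulo 3. Odd powers fix F_3, so F = -1 on F_3: there is no affine F_3-point,
   and above each k in F_3 lie exactly the two F_9-points (k, +-i). For x in F_9 \ F_3 we have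
   x^8 = 1, so F(x) only depends on the exponents modulo 8, and one computes F(x)^4 = -1;
   since the nonzero squares of F_9 are fourth roots of unity, F(x) is not a square.
   Separability of F modulo 3 (good reduction, and by lifting also separability over Q)
   holds because F' factors into polynomials prime to F, and the constant coefficient -1
   makes the model minimal. *)

lemma power_mod_period:
  fixes x M :: "'a::euclidean_semiring_cancel"
  assumes "x ^ k mod M = 1 mod M"
  shows "x ^ n mod M = x ^ (n mod k) mod M"
proof -
  have "(x ^ k) ^ (n div k) mod M = (x ^ k mod M) ^ (n div k) mod M"
    by (simp only: power_mod)
  also have "\<dots> = 1 mod M"
    by (simp only: assms power_mod power_one)
  finally have period: "(x ^ k) ^ (n div k) mod M = 1 mod M" .
  have "x ^ n = x ^ (k * (n div k) + n mod k)"
    by (simp only: mult_div_mod_eq)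
  also have "\<dots> = (x ^ k) ^ (n div k) * x ^ (n mod k)"
    by (simp only: power_add power_mult)
  also have "\<dots> mod M = (1 mod M) * x ^ (n mod k) mod M"
    by (subst mod_mult_left_eq[symmetric]) (simp only: period)
  finally show ?thesis
    by (simp only: mod_mult_left_eq mult_1)
qed

lemma odd_mod_eight: "odd (n::nat) \<Longrightarrow> n mod 8 \<in> {1, 3, 5, 7}"
proof -
  have "odd k \<Longrightarrow> k < 8 \<Longrightarrow> k \<in> {1, 3, 5, 7}" for k :: nat
    unfolding insert_iff empty_iff by presburger
  then show "odd n \<Longrightarrow> n mod 8 \<in> {1, 3, 5, 7}"
    by (simp add: odd_iff_mod_2_eq_one mod_mod_cancel)
qed

lemma odd_mod_eight_sum_four:
  assumes "odd n" "odd m" "(n + m) mod 8 = (4::nat)"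
  shows "(n mod 8, m mod 8) \<in> {(1, 3), (3, 1), (5, 7), (7, 5)}"
proof -
  have "r \<in> {1, 3, 5, 7} \<Longrightarrow> s \<in> {1, 3, 5, 7} \<Longrightarrow> (r + s) mod 8 = 4 \<Longrightarrow>
      (r, s) \<in> {(1, 3), (3, 1), (5, 7), (7, 5)}" for r s :: nat
    by auto
  then show ?thesis
    using odd_mod_eight[OF assms(1)] odd_mod_eight[OF assms(2)] assms(3)
    by (simp add: mod_add_eq)
qed

lemma pcompose_monom_one: "pcompose (Polynomial.monom 1 n) q = q ^ n"
  by (induction n) (simp_all add: monom_Suc pcompose_pCons monom_0)

lemma coprime_linear_if_not_root:
  fixes f :: "'a::field_gcd poly"
  assumes "poly f k \<noteq> 0"
  shows "coprime f [:-k, 1:]"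
proof -
  have "prime_elem [:-k, 1:]"
    by (rule prime_elem_linear_field_poly) simp
  moreover have "\<not> [:-k, 1:] dvd f"
    using assms dvd_iff_poly_eq_0[of "-k" f] by simp
  ultimately have "coprime [:-k, 1:] f"
    by (rule prime_elem_imp_coprime)
  then show ?thesis
    by (simp only: coprime_commute)
qed

lemma coprime_monom_if_not_root_0:
  fixes f :: "'a::field_gcd poly"
  assumes "poly f 0 \<noteq> 0" "c \<noteq> 0"
  shows "coprime f (Polynomial.monom c k)"
proof -
  have "coprime f ([:0, 1:] ^ k)"
    using coprime_linear_if_not_root[OF assms(1)] by simp
  moreover have "coprime f [:c:]"
    using assms(2) by (simp add: is_unit_const_poly_iff is_unit_right_imp_coprime)
  ultimately have "coprime f ([:c:] * [:0, 1:] ^ k)"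
    by (simp only: coprime_mult_right_iff)
  moreover have "[:c:] * [:0, 1:] ^ k = Polynomial.monom c k"
    by (simp add: monom_altdef)
  ultimately show ?thesis
    by simp
qed

lemma square_free_if_square_free_reduction:
  fixes F :: "int poly"
  assumes monic: "lead_coeff F = 1"
    and sf: "square_free (map_poly of_int F :: 'a::comm_ring_1 poly)"
  shows "square_free F"
proof (rule square_freeI)
  show "F \<noteq> 0"
    using monic by auto
  fix q :: "int poly"
  assume deg: "degree q > 0" and "q * q dvd F"
  then obtain h where F: "F = q * q * h" by blast
  have "1 = lead_coeff q * (lead_coeff q * lead_coeff h)"
    using monic by (simp add: F lead_coeff_mult mult.assoc)
  then have "lead_coeff q dvd 1"
    by (rule dvdI)
  then have "lead_coeff q = 1 \<or> lead_coeff q = -1"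
    by (simp only: zdvd1_eq) arith
  then have "Polynomial.coeff (map_poly of_int q :: 'a poly) (degree q) \<noteq> 0"
    by (auto simp: coeff_map_poly)
  then have "degree (map_poly of_int q :: 'a poly) > 0"
    using deg le_degree by fastforce
  moreover have "map_poly of_int q * map_poly of_int q dvd (map_poly of_int F :: 'a poly)"
    by (simp add: F of_int_poly_hom.hom_mult)
  ultimately show False
    using sf by (auto simp: square_free_def)
qed

lemma separable_rat_if_separable_reduction:
  fixes F :: "int poly"
  assumes "lead_coeff F = 1"
    and "Defs.separable (map_poly of_int F :: 'a::{field, factorial_ring_gcd, semiring_gcd_mult_normalize} poly)"
  shows "Defs.separable (map_poly of_int F :: rat poly)"
proof -
  have "square_free (map_poly of_int F :: 'a poly)"
    using assms(2) separable_imp_square_free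
    unfolding Defs.separable_def Square_Free_Factorization.separable_def by blast
  then have "square_free (map_poly rat_of_int F)"
    using square_free_int_rat square_free_if_square_free_reduction assms(1) by blast
  then show ?thesis
    using square_free_iff_separable
    unfolding Defs.separable_def Square_Free_Factorization.separable_def by blast
qed

section \<open>The field \<open>F\<^sub>3\<close>\<close>

lemma CHAR_F3: "CHAR(F3) = 3"
  by (simp add: card_three)

lemma of_int_F3_eq_iff: "(of_int a :: F3) = of_int b \<longleftrightarrow> a mod 3 = b mod 3"
  using of_int_eq_iff_cong_CHAR[of a b, where 'a=F3] by (simp add: CHAR_F3 card_three cong_def)

lemma F3_numerals: "(2::F3) = -1" "(3::F3) = 0" "(5::F3) = -1"
    "(7::F3) = 1" "(9::F3) = 0" "(13::F3) = 1"
  using of_int_F3_eq_iff[of 2 "-1"] of_int_F3_eq_iff[of 3 0]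
    of_int_F3_eq_iff[of 5 "-1"] of_int_F3_eq_iff[of 7 1] of_int_F3_eq_iff[of 9 0]
    of_int_F3_eq_iff[of 13 1]
  by simp_all

lemma F3_cases: "(x::F3) = 0 \<or> x = 1 \<or> x = -1"
proof -
  have "(1::F3) \<noteq> -1" "(0::F3) \<noteq> -1"
    using of_int_F3_eq_iff[of 1 "-1"] of_int_F3_eq_iff[of 0 "-1"] by auto
  then have "card {0, 1, -1::F3} = CARD(F3)"
    by (simp add: card_three)
  then have "{0, 1, -1::F3} = UNIV"
    by (intro card_subset_eq) auto
  then show ?thesis by auto
qed

lemma F3_power_odd: "odd n \<Longrightarrow> (k::F3) ^ n = k"
  using F3_cases[of k] by (auto simp: power_0_left odd_pos)

lemma F3_square_ne_neg_one: "(k::F3)\<^sup>2 \<noteq> -1"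
  using F3_cases[of k] of_int_F3_eq_iff[of 1 "-1"] of_int_F3_eq_iff[of 0 "-1"] by auto

lemma of_nat_F3_eq_0_iff: "(of_nat n :: F3) = 0 \<longleftrightarrow> 3 dvd n"
  by (simp add: of_nat_eq_0_iff_char_dvd CHAR_F3 card_three)

lemma F3_obtain_of_int: obtains a :: int where "a \<in> {0, 1, 2}" "(k::F3) = of_int a"
proof -
  have "k = of_int 0 \<or> k = of_int 1 \<or> k = (of_int 2 :: F3)"
    using F3_cases[of k] by (auto simp: F3_numerals)
  then show thesis using that by blast
qed

lemma F3_poly_cube_diff: "(p - q :: F3 poly) ^ 3 = p ^ 3 - q ^ 3"
proof -
  have "(3 :: F3 poly) = [:3:]"
    by (metis of_nat_numeral of_nat_poly)
  then have three: "(3 :: F3 poly) = 0"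
    by (simp add: F3_numerals)
  have "(p - q) ^ 3 = p ^ 3 - q ^ 3 - 3 * (p\<^sup>2 * q - p * q\<^sup>2)"
    by (simp add: algebra_simps power3_eq_cube power2_eq_square)
  then show ?thesis
    by (simp add: three)
qed

section \<open>The field \<open>F\<^sub>9\<close>\<close>

lemma degree_F9_modulus: "degree F9_modulus = 2"
  by (simp add: F9_modulus_def)

lemma mod_F9_modulus_small: "degree u \<le> 1 \<Longrightarrow> u mod F9_modulus = u"
  by (rule mod_poly_less) (simp add: degree_F9_modulus)

lemma F9_modulus_eq: "F9_modulus = [:0, 1:] ^ 2 + 1"
proof -
  have "[:0, 1::F3:] ^ 2 = [:0, 0, 1:]"
    by (simp add: power2_eq_square)
  moreover have "[:1, 0, 1::F3:] = [:0, 0, 1:] + [:1:]"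
    by (simp only: add_pCons add_0_left add_0_right)
  ultimately show ?thesis
    by (simp only: F9_modulus_def pCons_one)
qed

lemma F9_iff_linear: "u \<in> F9 \<longleftrightarrow> (\<exists>c d. u = [:c, d:])"
proof
  assume "u \<in> F9"
  then have "u = [:Polynomial.coeff u 0, Polynomial.coeff u 1:]"
    by (intro poly_eqI) (auto simp: F9_def coeff_pCons coeff_eq_0 split: nat.split)
  then show "\<exists>c d. u = [:c, d:]" by blast
qed (auto simp: F9_def)

(* An element a + b t of F_9 = F_3[t]/(t^2 + 1) is represented by the Gaussian integer a + b i;
   products of representatives are reduced modulo 3, so that simp can evaluate them. *)
definition gauss_F9 :: "int \<times> int \<Rightarrow> F3 poly" where
  "gauss_F9 z = [:of_int (fst z), of_int (snd z):]"

fun gauss_mult :: "int \<times> int \<Rightarrow> int \<times> int \<Rightarrow> int \<times> int" where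
  "gauss_mult (a, b) (c, d) = ((a * c - b * d) mod 3, (a * d + b * c) mod 3)"

primrec gauss_pow :: "int \<times> int \<Rightarrow> nat \<Rightarrow> int \<times> int" where
  "gauss_pow z 0 = (1, 0)"
| "gauss_pow z (Suc n) = gauss_mult z (gauss_pow z n)"

lemma gauss_F9_in_F9: "gauss_F9 z \<in> F9"
  by (simp add: gauss_F9_def F9_def)

lemma gauss_F9_mod: "gauss_F9 z mod F9_modulus = gauss_F9 z"
  by (rule mod_F9_modulus_small) (simp add: gauss_F9_def)

lemma gauss_F9_add: "gauss_F9 (z + w) = gauss_F9 z + gauss_F9 w"
  by (simp add: gauss_F9_def)

lemma gauss_F9_diff: "gauss_F9 (z - w) = gauss_F9 z - gauss_F9 w"
  by (simp add: gauss_F9_def)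

lemma gauss_F9_one: "gauss_F9 (1, 0) = 1"
  by (simp add: gauss_F9_def)

lemma gauss_F9_zero: "gauss_F9 (0, 0) = 0"
  by (simp add: gauss_F9_def)

lemma gauss_F9_neg_one: "gauss_F9 (-1, 0) = -1"
  by (simp only: gauss_F9_def fst_conv snd_conv of_int_minus of_int_1 of_int_0 pCons_0_0
      one_pCons minus_pCons minus_zero)

lemma gauss_F9_eq_iff:
  "gauss_F9 z = gauss_F9 w \<longleftrightarrow> fst z mod 3 = fst w mod 3 \<and> snd z mod 3 = snd w mod 3"
  by (simp add: gauss_F9_def of_int_F3_eq_iff)

lemma gauss_F9_mult_mod: "gauss_F9 z * gauss_F9 w mod F9_modulus = gauss_F9 (gauss_mult z w)"
proof -
  obtain a b c d where z: "z = (a, b)" and w: "w = (c, d)" by fastforce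
  have "gauss_F9 (gauss_mult z w) = gauss_F9 (a * c - b * d, a * d + b * c)"
    by (simp add: z w gauss_F9_eq_iff)
  then have "gauss_F9 z * gauss_F9 w = gauss_F9 (gauss_mult z w) + [:of_int (b * d):] * F9_modulus"
    by (simp add: z w gauss_F9_def F9_modulus_def algebra_simps)
  then show ?thesis
    by (simp only: mod_mult_self1 gauss_F9_mod)
qed

lemma gauss_F9_power_mod: "gauss_F9 z ^ n mod F9_modulus = gauss_F9 (gauss_pow z n)"
proof (induction n)
  case 0
  show ?case by (simp add: gauss_F9_one mod_F9_modulus_small)
next
  case (Suc n)
  have "gauss_F9 z ^ Suc n mod F9_modulus = gauss_F9 z * (gauss_F9 z ^ n mod F9_modulus) mod F9_modulus"
    by (simp add: mod_mult_right_eq)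
  then show ?case
    by (simp add: Suc.IH gauss_F9_mult_mod)
qed

lemma F9_obtain_gauss:
  assumes "x \<in> F9"
  obtains a b where "a \<in> {0, 1, 2}" "b \<in> {0, 1, 2}" "x = gauss_F9 (a, b)"
proof -
  obtain c d where x: "x = [:c, d:]" using assms F9_iff_linear by blast
  obtain a where "a \<in> {0, 1, 2}" "c = of_int a" by (rule F3_obtain_of_int)
  moreover obtain b where "b \<in> {0, 1, 2}" "d = of_int b" by (rule F3_obtain_of_int)
  ultimately show thesis
    using that by (simp add: x gauss_F9_def)
qed

lemma F9_obtain_gauss_nonconstant:
  assumes "x \<in> F9" "degree x = 1"
  obtains a b where "a \<in> {0, 1, 2}" "b \<in> {1, 2}" "x = gauss_F9 (a, b)"
proof -
  obtain a b where ab: "a \<in> {0, 1, 2}" "b \<in> {0, 1, 2}" and x: "x = gauss_F9 (a, b)"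
    using assms(1) by (rule F9_obtain_gauss)
  have "b \<noteq> 0"
    using assms(2) x by (auto simp: gauss_F9_def)
  then show thesis
    using that ab x by blast
qed

lemma F9_power_eight_mod:
  assumes "x \<in> F9" "x \<noteq> 0"
  shows "x ^ 8 mod F9_modulus = 1"
proof -
  obtain a b where ab: "a \<in> {0, 1, 2}" "b \<in> {0, 1, 2}" and x: "x = gauss_F9 (a, b)"
    using assms(1) by (rule F9_obtain_gauss)
  have "(a, b) \<noteq> (0, 0)"
    using assms(2) x by (auto simp: gauss_F9_def)
  have "\<forall>a\<in>{0, 1, 2}. \<forall>b\<in>{0, 1, 2}.
      (a, b) \<noteq> (0, 0) \<longrightarrow> gauss_F9 (gauss_pow (a, b) 8) = gauss_F9 (1, 0)"
    by (simp only: ball_simps) (simp add: gauss_F9_eq_iff eval_nat_numeral)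
  then have "gauss_F9 (gauss_pow (a, b) 8) = gauss_F9 (1, 0)"
    using ab \<open>(a, b) \<noteq> (0, 0)\<close> by blast
  then show ?thesis
    by (simp only: x gauss_F9_power_mod gauss_F9_one)
qed

lemma F9_power_congruent:
  assumes "gauss_F9 z \<noteq> 0"
  shows "F9_modulus dvd gauss_F9 z ^ n - gauss_F9 (gauss_pow z (n mod 8))"
proof -
  have "gauss_F9 z ^ 8 mod F9_modulus = 1 mod F9_modulus"
    using F9_power_eight_mod[OF gauss_F9_in_F9 assms] by (simp add: mod_F9_modulus_small)
  then have "gauss_F9 z ^ n mod F9_modulus = gauss_F9 z ^ (n mod 8) mod F9_modulus"
    by (rule power_mod_period)
  also have "\<dots> = gauss_F9 (gauss_pow z (n mod 8)) mod F9_modulus"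
    by (simp only: gauss_F9_power_mod gauss_F9_mod)
  finally show ?thesis
    by (simp only: mod_eq_dvd_iff)
qed

lemma power_mod_if_congruent:
  assumes "F9_modulus dvd u - gauss_F9 z"
  shows "u ^ n mod F9_modulus = gauss_F9 (gauss_pow z n)"
proof -
  have "u mod F9_modulus = gauss_F9 z mod F9_modulus"
    using assms by (simp only: mod_eq_dvd_iff)
  then have "u ^ n mod F9_modulus = gauss_F9 z ^ n mod F9_modulus"
    by (metis power_mod)
  then show ?thesis
    by (simp only: gauss_F9_power_mod)
qed

lemma F9_coprime_modulus:
  assumes "x \<in> F9" "x \<noteq> 0"
  shows "coprime x F9_modulus"
proof (rule coprimeI)
  fix d
  assume "d dvd x" "d dvd F9_modulus"
  moreover have "x dvd x ^ 8"
    by (rule dvd_power) simp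
  ultimately have "d dvd x ^ 8 - x ^ 8 div F9_modulus * F9_modulus"
    by (intro dvd_diff dvd_mult) (rule dvd_trans)
  then show "is_unit d"
    by (simp add: minus_div_mult_eq_mod F9_power_eight_mod[OF assms])
qed

lemma coprime_F9_modulus_if_congruent:
  assumes "F9_modulus dvd f - u" "u \<in> F9" "u \<noteq> 0"
  shows "coprime f F9_modulus"
proof -
  have "f mod F9_modulus = u mod F9_modulus"
    using assms(1) by (simp only: mod_eq_dvd_iff)
  moreover have "u mod F9_modulus = u"
    using assms(2) by (intro mod_F9_modulus_small) (simp add: F9_def)
  moreover have "F9_modulus \<noteq> 0"
    by (simp add: F9_modulus_def)
  ultimately show ?thesis
    using F9_coprime_modulus[OF assms(2,3)] coprime_mod_left_iff by metis
qed

lemma F9_not_square_if_power_four: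
  assumes v: "v ^ 4 mod F9_modulus = -1" and y: "y \<in> F9"
  shows "\<not> F9_modulus dvd y\<^sup>2 - v"
proof
  assume "F9_modulus dvd y\<^sup>2 - v"
  then have yv: "y\<^sup>2 mod F9_modulus = v mod F9_modulus"
    by (simp add: mod_eq_dvd_iff)
  have "y ^ 8 mod F9_modulus = (y\<^sup>2 mod F9_modulus) ^ 4 mod F9_modulus"
    by (simp add: power_mod flip: power_mult)
  also have "\<dots> = -1"
    by (simp add: yv power_mod v)
  finally have y8: "y ^ 8 mod F9_modulus = -1" .
  show False
  proof (cases "y = 0")
    case True
    then show False using y8 by simp
  next
    case False
    then have "(1 :: F3 poly) = y ^ 8 mod F9_modulus"
      by (rule F9_power_eight_mod[OF y, symmetric])
    also note y8
    finally have "Polynomial.coeff 1 0 = Polynomial.coeff (-1 :: F3 poly) 0"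
      by (rule arg_cong)
    then have "(1 :: F3) = -1"
      by simp
    then show False
      using of_int_F3_eq_iff[of 1 "-1"] by simp
  qed
qed

lemma F9_sqrt_neg_one:
  assumes "y \<in> F9"
  shows "F9_modulus dvd y\<^sup>2 + 1 \<longleftrightarrow> y = [:0, 1:] \<or> y = - [:0, 1:]"
proof -
  obtain a b where ab: "a \<in> {0, 1, 2}" "b \<in> {0, 1, 2}" and y: "y = gauss_F9 (a, b)"
    using assms by (rule F9_obtain_gauss)
  have "(y\<^sup>2 + 1) mod F9_modulus = (y\<^sup>2 mod F9_modulus + 1) mod F9_modulus"
    by (simp add: mod_add_left_eq)
  also have "\<dots> = (gauss_F9 (gauss_pow (a, b) 2) + gauss_F9 (1, 0)) mod F9_modulus"
    by (simp only: y gauss_F9_power_mod gauss_F9_one)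
  also have "\<dots> = gauss_F9 (gauss_pow (a, b) 2 + (1, 0))"
    by (simp only: gauss_F9_mod flip: gauss_F9_add)
  finally have "F9_modulus dvd y\<^sup>2 + 1 \<longleftrightarrow> gauss_F9 (gauss_pow (a, b) 2 + (1, 0)) = gauss_F9 (0, 0)"
    by (simp only: dvd_eq_mod_eq_0 gauss_F9_zero)
  also have "\<dots> \<longleftrightarrow> gauss_F9 (a, b) = gauss_F9 (0, 1) \<or> gauss_F9 (a, b) = gauss_F9 (0, -1)"
  proof -
    have "\<forall>a\<in>{0, 1, 2}. \<forall>b\<in>{0, 1, 2}.
        (gauss_F9 (gauss_pow (a, b) 2 + (1, 0)) = gauss_F9 (0, 0) \<longleftrightarrow>
         gauss_F9 (a, b) = gauss_F9 (0, 1) \<or> gauss_F9 (a, b) = gauss_F9 (0, -1))"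
      by (simp only: ball_simps) (simp add: gauss_F9_eq_iff eval_nat_numeral)
    then show ?thesis
      using ab by blast
  qed
  moreover have "[:0, 1:] = gauss_F9 (0, 1)" "- [:0, 1:] = gauss_F9 (0, -1)"
    by (simp_all add: gauss_F9_def) (simp only: one_pCons minus_pCons minus_zero)
  ultimately show ?thesis
    by (simp only: y)
qed

section \<open>Minimal models and congruence families\<close>

lemma affine_points_if_values:
  assumes F3_values: "\<And>k. poly (rhs3 g a) k = -1"
    and F9_values: "\<And>x. x \<in> F9 \<Longrightarrow> degree x = 1 \<Longrightarrow>
      pcompose (rhs3 g a) x ^ 4 mod F9_modulus = -1"
  shows "affine_pts_F3 g a = {}"
    and "affine_pts_F9 g a = {(x, y). \<exists>k. x = [:k:] \<and> (y = [:0, 1:] \<or> y = - [:0, 1:])}"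
proof -
  show "affine_pts_F3 g a = {}"
    using F3_values F3_square_ne_neg_one by (simp add: affine_pts_F3_def)
  have "F9_modulus dvd y\<^sup>2 - pcompose (rhs3 g a) x \<longleftrightarrow>
      (\<exists>k. x = [:k:] \<and> (y = [:0, 1:] \<or> y = - [:0, 1:]))"
    if x: "x \<in> F9" and y: "y \<in> F9" for x y
  proof (cases "degree x = 0")
    case True
    then obtain k where x: "x = [:k:]"
      by (meson degree_eq_zeroE)
    have "y\<^sup>2 - pcompose (rhs3 g a) x = y\<^sup>2 + 1"
      by (simp add: x pcompose_pCons_0 F3_values)
    then have "F9_modulus dvd y\<^sup>2 - pcompose (rhs3 g a) x \<longleftrightarrow> y = [:0, 1:] \<or> y = - [:0, 1:]"
      by (simp only: F9_sqrt_neg_one[OF y])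
    then show ?thesis
      using x by simp
  next
    case False
    then have "degree x = 1"
      using x by (simp add: F9_def)
    then show ?thesis
      using F9_not_square_if_power_four[OF F9_values[OF x] y] by auto
  qed
  moreover have "[:k:] \<in> F9" "[:0, 1:] \<in> F9" "- [:0, 1:] \<in> F9" for k :: F3
    by (auto simp: F9_def)
  ultimately show "affine_pts_F9 g a =
      {(x, y). \<exists>k. x = [:k:] \<and> (y = [:0, 1:] \<or> y = - [:0, 1:])}"
    unfolding affine_pts_F9_def by auto
qed

lemma coeff_hyp_rhs:
  "Polynomial.coeff (hyp_rhs g a) k =
     (if k = 2 * g + 1 then 1 else if k + 2 \<le> 2 * g + 1 then a (2 * g + 1 - k) else 0)"
proof -
  have "(\<Sum>i\<in>{2..2 * g + 1}. Polynomial.coeff (Polynomial.monom (a i) (2 * g + 1 - i)) k)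
      = (\<Sum>i\<in>{2..2 * g + 1}. if k \<le> 2 * g + 1 \<and> i = 2 * g + 1 - k then a i else 0)"
    by (rule sum.cong) (auto simp: coeff_monom)
  also have "\<dots> = (if k + 2 \<le> 2 * g + 1 then a (2 * g + 1 - k) else 0)"
    by (cases "k \<le> 2 * g + 1") (auto simp: sum.delta)
  finally have sum: "(\<Sum>i\<in>{2..2 * g + 1}. Polynomial.coeff (Polynomial.monom (a i) (2 * g + 1 - i)) k)
      = (if k + 2 \<le> 2 * g + 1 then a (2 * g + 1 - k) else 0)" .
  show ?thesis
    unfolding hyp_rhs_def coeff_add coeff_sum sum by (auto simp: coeff_monom)
qed

lemma hyp_rhs_coeffs:
  fixes F :: "int poly"
  assumes "degree F = 2 * g + 1" "lead_coeff F = 1" "Polynomial.coeff F (2 * g) = 0"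
  shows "hyp_rhs g (\<lambda>i. Polynomial.coeff F (2 * g + 1 - i)) = F"
proof (rule poly_eqI)
  fix k
  have "Polynomial.coeff F k = 0" if "k + 2 > 2 * g + 1" "k \<noteq> 2 * g + 1"
    using that assms by (cases "k = 2 * g") (auto intro: coeff_eq_0)
  then show "Polynomial.coeff (hyp_rhs g (\<lambda>i. Polynomial.coeff F (2 * g + 1 - i))) k = Polynomial.coeff F k"
    using assms by (auto simp: coeff_hyp_rhs)
qed

lemma rhs3_eq_if_cong:
  assumes "\<forall>i\<in>{2..2 * g + 1}. [a i = c i] (mod 3)"
  shows "rhs3 g a = rhs3 g c"
proof (rule poly_eqI)
  fix k
  have "(of_int (a (2 * g + 1 - k)) :: F3) = of_int (c (2 * g + 1 - k))" if "k + 2 \<le> 2 * g + 1"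
    using that assms by (simp add: of_int_F3_eq_iff cong_def)
  then show "Polynomial.coeff (rhs3 g a) k = Polynomial.coeff (rhs3 g c) k"
    by (simp add: rhs3_def coeff_map_poly coeff_hyp_rhs)
qed

lemma minimal_model_if_last_coeff_neg_one:
  assumes "g \<ge> 1" "a (2 * g + 1) = -1"
    and "Defs.separable (map_poly of_int (hyp_rhs g a) :: rat poly)"
  shows "minimal_model g a"
proof -
  have "\<not> p ^ (2 * (2 * g + 1)) dvd a (2 * g + 1)" if "prime p" for p :: int
  proof -
    have "p dvd p ^ (2 * (2 * g + 1))"
      by (rule dvd_power) simp_all
    moreover have "\<not> p dvd -1"
      using prime_gt_1_int[OF that] by simp
    ultimately show ?thesis
      using assms(2) dvd_trans by metis
  qed
  moreover have "2 * g + 1 \<in> {2..2 * g + 1}"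
    using assms(1) by simp
  ultimately show ?thesis
    using assms(3) unfolding minimal_model_def by blast
qed

definition prescribed_reduction3 :: "nat \<Rightarrow> (nat \<Rightarrow> int) \<Rightarrow> bool" where
  "prescribed_reduction3 g a \<longleftrightarrow>
     good_red3 g a \<and> affine_pts_F3 g a = {} \<and>
     (\<exists>\<alpha>\<in>F9. degree \<alpha> = 1 \<and>
        affine_pts_F9 g a = {(x, y). \<exists>k::F3. x = [:k:] \<and> (y = \<alpha> \<or> y = - \<alpha>)})"

lemma congruence_family_from_polynomial:
  fixes F :: "int poly"
  assumes "g \<ge> 1"
    and "degree F = 2 * g + 1" and monic: "lead_coeff F = 1"
    and "Polynomial.coeff F (2 * g) = 0" and "Polynomial.coeff F 0 = -1"
    and sep: "Defs.separable (map_poly of_int F :: F3 poly)"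
    and F3_values: "\<And>k. poly (map_poly of_int F :: F3 poly) k = -1"
    and F9_values: "\<And>x. x \<in> F9 \<Longrightarrow> degree x = 1 \<Longrightarrow>
      pcompose (map_poly of_int F) x ^ 4 mod F9_modulus = -1"
  shows "\<exists>c m :: nat \<Rightarrow> int. (\<forall>i\<in>{2..2 * g + 1}. m i > 0) \<and>
    (\<exists>a. in_cong_family g c m a) \<and>
    (\<forall>a. in_cong_family g c m a \<longrightarrow> prescribed_reduction3 g a)"
proof (intro exI conjI)
  define c where "c i = Polynomial.coeff F (2 * g + 1 - i)" for i
  have F: "hyp_rhs g c = F"
    unfolding c_def using assms by (intro hyp_rhs_coeffs) auto
  have "c (2 * g + 1) = -1"
    using assms(5) by (simp add: c_def)
  then have "minimal_model g c"
    using assms(1) separable_rat_if_separable_reduction[OF monic sep]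
    by (intro minimal_model_if_last_coeff_neg_one) (simp_all add: F)
  then show "in_cong_family g c (\<lambda>_. 3) c"
    by (simp add: in_cong_family_def)
  show "\<forall>i\<in>{2..2 * g + 1}. (3::int) > 0" by simp
  show "\<forall>a. in_cong_family g c (\<lambda>_. 3) a \<longrightarrow> prescribed_reduction3 g a"
  proof (intro allI impI)
    fix a
    assume "in_cong_family g c (\<lambda>_. 3) a"
    then have rhs3: "rhs3 g a = map_poly of_int F"
      using rhs3_eq_if_cong[of g a c] by (simp add: in_cong_family_def rhs3_def F)
    have "[:0, 1:] \<in> F9" "degree [:0, 1 :: F3:] = 1"
      by (simp_all add: F9_def)
    then show "prescribed_reduction3 g a"
      using sep affine_points_if_values[of g a] F3_values F9_values
      unfolding prescribed_reduction3_def good_red3_def rhs3 by blast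
  qed
qed

section \<open>Trinomials\<close>

definition trinomial :: "nat \<Rightarrow> nat \<Rightarrow> 'a::comm_ring_1 poly" where
  "trinomial n m = Polynomial.monom 1 n - Polynomial.monom 1 m - 1"

lemma coeff_trinomial:
  "Polynomial.coeff (trinomial n m) k =
     (if k = n then 1 else 0) - (if k = m then 1 else 0) - (if k = 0 then 1 else 0)"
  by (simp add: trinomial_def coeff_monom)

lemma of_int_poly_trinomial: "map_poly of_int (trinomial n m :: int poly) = trinomial n m"
  by (rule poly_eqI) (simp add: coeff_map_poly coeff_trinomial)

lemma degree_trinomial: "m < n \<Longrightarrow> degree (trinomial n m :: 'a::comm_ring_1 poly) = n"
  by (rule antisym[OF degree_le le_degree]) (auto simp: coeff_trinomial)

lemma pcompose_trinomial: "pcompose (trinomial n m) x = x ^ n - x ^ m - 1"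
  by (simp add: trinomial_def pcompose_diff pcompose_monom_one)

lemma poly_trinomial_0: "0 < n \<Longrightarrow> 0 < m \<Longrightarrow> poly (trinomial n m) 0 = -1"
  by (simp add: trinomial_def poly_monom power_0_left)

lemma poly_trinomial_F3: "odd n \<Longrightarrow> odd m \<Longrightarrow> poly (trinomial n m) (k::F3) = -1"
  by (simp add: trinomial_def poly_monom F3_power_odd)

lemma pderiv_trinomial:
  "pderiv (trinomial n m :: 'a::idom poly) = Polynomial.monom (of_nat n) (n - 1) - Polynomial.monom (of_nat m) (m - 1)"
  by (simp add: trinomial_def pderiv_diff pderiv_monom)

lemma gauss_trinomial_values:
  assumes "(r, s) \<in> {(1, 3), (3, 1), (5, 7), (7, 5)}" "a \<in> {0, 1, 2}" "b \<in> {1, 2}"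
  shows "gauss_F9 (gauss_pow (gauss_pow (a, b) r - gauss_pow (a, b) s - (1, 0)) 4) = gauss_F9 (-1, 0)"
proof -
  have "\<forall>(r, s)\<in>{(1, 3), (3, 1), (5, 7), (7, 5)}. \<forall>a\<in>{0, 1, 2}. \<forall>b\<in>{1, 2}.
      gauss_F9 (gauss_pow (gauss_pow (a, b) r - gauss_pow (a, b) s - (1, 0)) 4) = gauss_F9 (-1, 0)"
    by (simp only: ball_simps prod.case) (simp add: gauss_F9_eq_iff eval_nat_numeral)
  then show ?thesis
    using assms by blast
qed

lemma trinomial_congruent:
  assumes "gauss_F9 z \<noteq> 0"
  shows "F9_modulus dvd pcompose (trinomial n m) (gauss_F9 z)
    - gauss_F9 (gauss_pow z (n mod 8) - gauss_pow z (m mod 8) - (1, 0))"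
proof -
  have "F9_modulus dvd (gauss_F9 z ^ n - gauss_F9 (gauss_pow z (n mod 8)))
      - (gauss_F9 z ^ m - gauss_F9 (gauss_pow z (m mod 8)))"
    using assms by (intro dvd_diff F9_power_congruent)
  then show ?thesis
    by (simp only: pcompose_trinomial gauss_F9_diff gauss_F9_one) (simp add: algebra_simps)
qed

lemma trinomial_power_four_mod:
  assumes "odd n" "odd m" "(n + m) mod 8 = 4" "x \<in> F9" "degree x = 1"
  shows "pcompose (trinomial n m) x ^ 4 mod F9_modulus = -1"
proof -
  obtain a b where ab: "a \<in> {0, 1, 2}" "b \<in> {1, 2}" and x: "x = gauss_F9 (a, b)"
    using assms(4,5) by (rule F9_obtain_gauss_nonconstant)
  have "gauss_F9 (a, b) \<noteq> 0"
    using assms(5) x by auto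
  then have "pcompose (trinomial n m) x ^ 4 mod F9_modulus =
      gauss_F9 (gauss_pow (gauss_pow (a, b) (n mod 8) - gauss_pow (a, b) (m mod 8) - (1, 0)) 4)"
    unfolding x by (intro power_mod_if_congruent trinomial_congruent)
  also have "\<dots> = gauss_F9 (-1, 0)"
    using odd_mod_eight_sum_four[OF assms(1-3)] ab by (rule gauss_trinomial_values)
  finally show ?thesis
    by (simp only: gauss_F9_neg_one)
qed

lemma coprime_X_cube_minus_X_if_no_roots:
  fixes f :: "F3 poly"
  assumes "\<And>k. poly f k \<noteq> 0"
  shows "coprime f ([:0, 1:] ^ 3 - [:0, 1:])"
proof -
  have "[:0, 1:] ^ 3 - [:0, 1:] = [:0, 1:] * ([:0, 1:] - 1) * ([:0, 1 :: F3:] + 1)"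
    by (simp add: power3_eq_cube algebra_simps)
  also have "\<dots> = [:-0, 1:] * [:-1, 1:] * [:-(-1), 1:]"
    by (simp only: minus_zero minus_minus one_pCons diff_pCons add_pCons diff_0_right add_0_right
        diff_0 add_0_left)
  finally show ?thesis
    using coprime_linear_if_not_root[OF assms] by (simp only: coprime_mult_right_iff)
qed

lemma separable_trinomial_if_char_dvd:
  assumes "0 < n" "0 < m" "(of_nat n = (0::'a::field_gcd)) \<noteq> (of_nat m = (0::'a))"
  shows "Defs.separable (trinomial n m :: 'a poly)"
  unfolding Defs.separable_def
proof (cases "of_nat n = (0::'a)")
  case True
  then have "pderiv (trinomial n m :: 'a poly) = Polynomial.monom (- of_nat m) (m - 1)"
    by (simp add: pderiv_trinomial minus_monom)
  then show "coprime (trinomial n m) (pderiv (trinomial n m :: 'a poly))"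
    using True assms by (simp add: coprime_monom_if_not_root_0 poly_trinomial_0)
next
  case False
  then have "pderiv (trinomial n m :: 'a poly) = Polynomial.monom (of_nat n) (n - 1)"
    using assms(3) by (simp add: pderiv_trinomial)
  then show "coprime (trinomial n m) (pderiv (trinomial n m :: 'a poly))"
    using False assms by (simp add: coprime_monom_if_not_root_0 poly_trinomial_0)
qed

lemma separable_trinomial_7_5: "Defs.separable (trinomial 7 5 :: F3 poly)"
proof -
  let ?f = "trinomial 7 5 :: F3 poly"
  let ?v = "gauss_pow (0, 1) (7 mod 8) - gauss_pow (0, 1) (5 mod 8) - (1, 0)"
  have X: "gauss_F9 (0, 1) = [:0, 1:]"
    by (simp add: gauss_F9_def)
  have "gauss_F9 (0, 1) \<noteq> 0"
    by (simp add: gauss_F9_def)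
  then have "F9_modulus dvd pcompose ?f (gauss_F9 (0, 1)) - gauss_F9 ?v"
    by (rule trinomial_congruent)
  then have "F9_modulus dvd ?f - gauss_F9 ?v"
    by (simp only: X pcompose_idR)
  moreover have "gauss_F9 ?v \<noteq> 0"
  proof -
    have "gauss_F9 ?v \<noteq> gauss_F9 (0, 0)"
      by (simp only: mod_less) (simp_all add: gauss_F9_eq_iff eval_nat_numeral)
    then show ?thesis
      by (simp only: gauss_F9_zero not_False_eq_True)
  qed
  ultimately have "coprime ?f F9_modulus"
    by (rule coprime_F9_modulus_if_congruent[OF _ gauss_F9_in_F9])
  moreover have "coprime ?f (Polynomial.monom 1 4)"
    by (rule coprime_monom_if_not_root_0) (simp_all add: poly_trinomial_0)
  moreover have "pderiv ?f = Polynomial.monom 1 4 * F9_modulus"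
  proof -
    have "pderiv ?f = Polynomial.monom 7 6 - Polynomial.monom 5 4"
      by (simp add: pderiv_trinomial)
    also have "\<dots> = [:0, 1:] ^ 6 + [:0, 1:] ^ 4"
      by (simp add: F3_numerals monom_altdef)
    also have "\<dots> = [:0, 1:] ^ 4 * ([:0, 1:] ^ 2 + 1)"
      by (simp add: algebra_simps flip: power_add)
    finally show ?thesis
      by (simp add: F9_modulus_eq monom_altdef)
  qed
  ultimately show ?thesis
    unfolding Defs.separable_def by simp
qed

lemma separable_trinomial_13_7: "Defs.separable (trinomial 13 7 :: F3 poly)"
proof -
  let ?f = "trinomial 13 7 :: F3 poly" and ?X = "[:0, 1 :: F3:]"
  have factor: "x ^ 4 - x ^ 2 = x * (x ^ 3 - x)" for x :: "F3 poly"
    by (simp add: algebra_simps eval_nat_numeral)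
  have "pderiv ?f = Polynomial.monom 13 12 - Polynomial.monom 7 6"
    by (simp add: pderiv_trinomial)
  also have "\<dots> = ?X ^ (4 * 3) - ?X ^ (2 * 3)"
    by (simp add: F3_numerals monom_altdef)
  also have "\<dots> = (?X ^ 4 - ?X ^ 2) ^ 3"
    by (simp only: power_mult F3_poly_cube_diff)
  also have "\<dots> = (?X * (?X ^ 3 - ?X)) ^ 3"
    by (simp only: factor)
  finally have "pderiv ?f = (?X * (?X ^ 3 - ?X)) ^ 3" .
  moreover have "coprime ?f (?X ^ 3 - ?X)"
    by (rule coprime_X_cube_minus_X_if_no_roots) (simp add: poly_trinomial_F3)
  moreover have "coprime ?f [:- 0, 1:]"
    by (rule coprime_linear_if_not_root) (simp add: poly_trinomial_F3)
  ultimately show ?thesis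
    unfolding Defs.separable_def
    by (simp only: minus_zero coprime_power_right_iff coprime_mult_right_iff simp_thms)
qed

(* For g = 4 no trinomial works: m = 3 is forced, and then F' vanishes modulo 3. *)
definition genus4_poly :: "'a::comm_ring_1 poly" where
  "genus4_poly = Polynomial.monom 1 9 + Polynomial.monom 1 3 + Polynomial.monom 1 1 - 1"

lemma coeff_genus4_poly:
  "Polynomial.coeff genus4_poly k =
     (if k = 9 then 1 else 0) + (if k = 3 then 1 else 0) + (if k = 1 then 1 else 0)
     - (if k = 0 then 1 else 0)"
  by (simp add: genus4_poly_def coeff_monom)

lemma of_int_poly_genus4_poly: "map_poly of_int (genus4_poly :: int poly) = genus4_poly"
  by (rule poly_eqI) (simp add: coeff_map_poly coeff_genus4_poly)

lemma degree_genus4_poly: "degree (genus4_poly :: 'a::comm_ring_1 poly) = 9"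
  by (rule antisym[OF degree_le le_degree]) (simp_all add: coeff_genus4_poly)

lemma poly_genus4_poly_F3: "poly genus4_poly (k::F3) = -1"
  by (simp add: genus4_poly_def poly_monom F3_power_odd F3_numerals)

lemma separable_genus4_poly: "Defs.separable (genus4_poly :: F3 poly)"
proof -
  have "pderiv (genus4_poly :: F3 poly) = 1"
    by (simp add: genus4_poly_def pderiv_add pderiv_diff pderiv_monom F3_numerals)
  then show ?thesis
    by (simp add: Defs.separable_def)
qed

lemma genus4_poly_power_four_mod:
  assumes "x \<in> F9" "degree x = 1"
  shows "pcompose genus4_poly x ^ 4 mod F9_modulus = -1"
proof -
  obtain a b where ab: "a \<in> {0, 1, 2}" "b \<in> {1, 2}" and x: "x = gauss_F9 (a, b)"
    using assms by (rule F9_obtain_gauss_nonconstant)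
  let ?p = "gauss_pow (a, b)"
  have "gauss_F9 (a, b) \<noteq> 0"
    using assms(2) x by auto
  then have "F9_modulus dvd (x ^ 9 - gauss_F9 (?p (9 mod 8))) + (x ^ 3 - gauss_F9 (?p (3 mod 8)))
      + (x ^ 1 - gauss_F9 (?p (1 mod 8)))"
    unfolding x by (intro dvd_add F9_power_congruent)
  moreover have "(A + B + C - 1) - (P + Q + R - 1) = (A - P) + (B - Q) + (C - R)"
    for A B C P Q R :: "F3 poly"
    by (simp add: algebra_simps)
  moreover have "(9::nat) mod 8 = 1" "(3::nat) mod 8 = 3" "(1::nat) mod 8 = 1"
    by simp_all
  ultimately have "F9_modulus dvd pcompose genus4_poly x - gauss_F9 (?p 1 + ?p 3 + ?p 1 - (1, 0))"
    by (simp only: genus4_poly_def pcompose_add pcompose_diff pcompose_monom_one pcompose_1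
        gauss_F9_add gauss_F9_diff gauss_F9_one)
  then have "pcompose genus4_poly x ^ 4 mod F9_modulus =
      gauss_F9 (gauss_pow (?p 1 + ?p 3 + ?p 1 - (1, 0)) 4)"
    by (rule power_mod_if_congruent)
  also have "\<dots> = gauss_F9 (-1, 0)"
  proof -
    have "\<forall>a\<in>{0, 1, 2}. \<forall>b\<in>{1, 2}. gauss_F9 (gauss_pow (gauss_pow (a, b) 1 + gauss_pow (a, b) 3
        + gauss_pow (a, b) 1 - (1, 0)) 4) = gauss_F9 (-1, 0)"
      by (simp only: ball_simps) (simp add: gauss_F9_eq_iff eval_nat_numeral)
    then show ?thesis
      using ab by blast
  qed
  finally show ?thesis
    by (simp only: gauss_F9_neg_one)
qed

lemma congruence_family_from_trinomial:
  fixes g m :: nat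
  assumes "g \<ge> 1" "odd m" "m + 2 \<le> 2 * g + 1" "(2 * g + 1 + m) mod 8 = 4"
    and sep: "Defs.separable (trinomial (2 * g + 1) m :: F3 poly)"
  shows "\<exists>c d :: nat \<Rightarrow> int. (\<forall>i\<in>{2..2 * g + 1}. d i > 0) \<and>
    (\<exists>a. in_cong_family g c d a) \<and>
    (\<forall>a. in_cong_family g c d a \<longrightarrow> prescribed_reduction3 g a)"
proof (rule congruence_family_from_polynomial[where F = "trinomial (2 * g + 1) m"])
  have m: "0 < m" "m < 2 * g"
    using assms(2,3) odd_pos by auto
  then show "degree (trinomial (2 * g + 1) m :: int poly) = 2 * g + 1"
    by (intro degree_trinomial) simp
  show "lead_coeff (trinomial (2 * g + 1) m :: int poly) = 1"
    using m by (simp add: degree_trinomial coeff_trinomial)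
  show "Polynomial.coeff (trinomial (2 * g + 1) m :: int poly) (2 * g) = 0"
    "Polynomial.coeff (trinomial (2 * g + 1) m :: int poly) 0 = -1"
    using m by (simp_all add: coeff_trinomial)
  show "Defs.separable (map_poly of_int (trinomial (2 * g + 1) m) :: F3 poly)"
    unfolding of_int_poly_trinomial by (rule sep)
  show "poly (map_poly of_int (trinomial (2 * g + 1) m) :: F3 poly) k = -1" for k
    unfolding of_int_poly_trinomial using assms(2) by (simp add: poly_trinomial_F3)
  show "pcompose (map_poly of_int (trinomial (2 * g + 1) m)) x ^ 4 mod F9_modulus = -1"
    if "x \<in> F9" "degree x = 1" for x
    unfolding of_int_poly_trinomial using assms(2,4) that by (intro trinomial_power_four_mod) simp_all
qed (rule assms(1))

lemma congruence_family_genus4: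
  assumes "g = 4"
  shows "\<exists>c d :: nat \<Rightarrow> int. (\<forall>i\<in>{2..2 * g + 1}. d i > 0) \<and>
    (\<exists>a. in_cong_family g c d a) \<and>
    (\<forall>a. in_cong_family g c d a \<longrightarrow> prescribed_reduction3 g a)"
proof (rule congruence_family_from_polynomial[where F = genus4_poly])
  show "degree (genus4_poly :: int poly) = 2 * g + 1"
    "lead_coeff (genus4_poly :: int poly) = 1"
    "Polynomial.coeff (genus4_poly :: int poly) (2 * g) = 0"
    "Polynomial.coeff (genus4_poly :: int poly) 0 = -1"
    using assms by (simp_all add: degree_genus4_poly coeff_genus4_poly)
  show "Defs.separable (map_poly of_int genus4_poly :: F3 poly)"
    unfolding of_int_poly_genus4_poly by (rule separable_genus4_poly)
  show "poly (map_poly of_int genus4_poly :: F3 poly) k = -1" for k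
    unfolding of_int_poly_genus4_poly by (rule poly_genus4_poly_F3)
  show "pcompose (map_poly of_int genus4_poly) x ^ 4 mod F9_modulus = -1"
    if "x \<in> F9" "degree x = 1" for x
    unfolding of_int_poly_genus4_poly using that by (rule genus4_poly_power_four_mod)
qed (use assms in simp)

lemma trinomial_exponent_exists:
  assumes "g \<ge> 3" "g \<noteq> 4"
  obtains m where "odd m" "m + 2 \<le> 2 * g + 1" "(2 * g + 1 + m) mod 8 = 4"
    "Defs.separable (trinomial (2 * g + 1) m :: F3 poly)"
proof -
  \<comment> \<open>For \<open>g = 3, 6\<close> the only admissible exponents, 5 and 7, are both prime to 3.\<close>
  consider "g = 3" | "g = 6" | "g \<noteq> 3" "g \<noteq> 6" by blast
  then show thesis
  proof cases
    case 1
    then show thesis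
      using that[of 5] separable_trinomial_7_5 by simp
  next
    case 2
    then show thesis
      using that[of 7] separable_trinomial_13_7 by simp
  next
    case 3
    have "\<exists>m. odd m \<and> m + 2 \<le> 2 * g + 1 \<and> (2 * g + 1 + m) mod 8 = 4 \<and>
        (3 dvd 2 * g + 1) \<noteq> (3 dvd m)"
      using assms 3 by presburger
    then obtain m where m: "odd m" "m + 2 \<le> 2 * g + 1" "(2 * g + 1 + m) mod 8 = 4"
      "(3 dvd 2 * g + 1) \<noteq> (3 dvd m)"
      by blast
    have "(of_nat (2 * g + 1) = (0::F3)) \<noteq> (of_nat m = (0::F3))"
      unfolding of_nat_F3_eq_0_iff by (rule m(4))
    then have "Defs.separable (trinomial (2 * g + 1) m :: F3 poly)"
      using m(1) by (intro separable_trinomial_if_char_dvd) (simp_all add: odd_pos)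
    then show thesis
      using that m by blast
  qed
qed

theorem lemma6p5:
  fixes g :: nat
  assumes "g \<ge> 3"
  shows "\<exists>c m :: nat \<Rightarrow> int.
     (\<forall>i\<in>{2..2*g+1}. m i > 0) \<and>
     (\<exists>a. in_cong_family g c m a) \<and>
     (\<forall>a. in_cong_family g c m a \<longrightarrow>
        good_red3 g a \<and>
        affine_pts_F3 g a = {} \<and>
        (\<exists>\<alpha>\<in>F9. degree \<alpha> = 1 \<and>
           affine_pts_F9 g a =
             {(x, y). \<exists>k::F3. x = [:k:] \<and> (y = \<alpha> \<or> y = - \<alpha>)}))"
proof -
  have "\<exists>c m :: nat \<Rightarrow> int. (\<forall>i\<in>{2..2 * g + 1}. m i > 0) \<and>
    (\<exists>a. in_cong_family g c m a) \<and>
    (\<forall>a. in_cong_family g c m a \<longrightarrow> prescribed_reduction3 g a)"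
  proof (cases "g = 4")
    case True
    then show ?thesis
      by (rule congruence_family_genus4)
  next
    case False
    obtain m where "odd m" "m + 2 \<le> 2 * g + 1" "(2 * g + 1 + m) mod 8 = 4"
      "Defs.separable (trinomial (2 * g + 1) m :: F3 poly)"
      using assms False by (rule trinomial_exponent_exists)
    then show ?thesis
      using assms by (intro congruence_family_from_trinomial) simp_all
  qed
  then show ?thesis
    unfolding prescribed_reduction3_def .
qed

end
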